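(* Let $f$ and $g$ be arithmetic functions with $f$ multiplicative, and let $n$ be a positive integer such that $(\mathrm{Id}*f)(p^{\alpha})\neq 0$ for every prime power $p^{\alpha}\| n$. Then $$(f*\Phi_g)(n)=(\mathrm{Id}*f)(n)\sum_{p^{\alpha}\| n}\frac{(f*\Phi_g)(p^{\alpha})}{(\mathrm{Id}*f)(p^{\alpha})}.$$
   Context: $\mathbb{N}$ denotes the positive integers; $p^{\alpha}\|n$ means $p$ prime, $p^\alpha\mid n$, $p^{\alpha+1}\nmid n$, and sums over $p^\alpha\|n$ run over the prime-power factors of $n$. $\mathrm{Id}(n)=n$. Dirichlet convolution: $(u*v)(n)=\sum_{d\mid n}u(d)v(n/d)$. $f$ is multiplicative if $f(mn)=f(m)f(n)$ for coprime $m,n$. The additive transform of an arithmetic function $g$ is the function $\Phi_g:\mathbb{N}\to\mathbb{C}$ with $\Phi_g(p^{\alpha})=g(p^{\alpha})$ for every prime $p$ and $\alpha\ge1$, and $\Phi_g(nm)=n\Phi_g(m)+m\Phi_g(n)$ for coprime $m,n$; equivalently $\Phi_g(n)=n\sum_{p^{\alpha}\| n} g(p^{\alpha})/p^{\alpha}$. *)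

theory Defs
  imports "HOL-Computational_Algebra.Computational_Algebra"
begin

definition dconv :: "(nat \<Rightarrow> complex) \<Rightarrow> (nat \<Rightarrow> complex) \<Rightarrow> nat \<Rightarrow> complex" where
  "dconv u v n = (\<Sum>d | d dvd n. u d * v (n div d))"

definition multiplicative_fun :: "(nat \<Rightarrow> complex) \<Rightarrow> bool" where
  "multiplicative_fun f \<longleftrightarrow>
     (\<forall>m n. m > 0 \<longrightarrow> n > 0 \<longrightarrow> coprime m n \<longrightarrow> f (m * n) = f m * f n)"

definition Id_fun :: "nat \<Rightarrow> complex" where
  "Id_fun n = of_nat n"

definition additive_transform :: "(nat \<Rightarrow> complex) \<Rightarrow> nat \<Rightarrow> complex" where
  "additive_transform g n =
     of_nat n * (\<Sum>p\<in>prime_factors n.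
        g (p ^ multiplicity p n) / of_nat (p ^ multiplicity p n))"

end

theory Submission
  imports Defs
begin

text \<open>
  With F = Id * f and G = f * \<Phi>, the additive transform \<Phi> of g obeys the Leibniz rule
  \<Phi>(ab) = a \<Phi>(b) + b \<Phi>(a) on coprime arguments, and convolving with the multiplicative f
  transports it to G(mk) = G(m) F(k) + F(m) G(k), with F multiplicative.
  Hence G/F is additive over coprime factors, and splitting n into its prime powers gives
  the formula.
\<close>

lemma sum_divisors_mult_coprime:
  fixes h :: "nat \<Rightarrow> 'a::comm_monoid_add"
  assumes "m > 0" "k > 0" "coprime m k"
  shows "(\<Sum>d | d dvd m * k. h d) = (\<Sum>d1 | d1 dvd m. \<Sum>d2 | d2 dvd k. h (d1 * d2))"
proof -
  have inj: "inj_on (\<lambda>(d1, d2). d1 * d2) ({d. d dvd m} \<times> {d. d dvd k})"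
  proof (rule inj_onI, clarsimp)
    fix d1 d2 e1 e2
    assume dvd: "d1 dvd m" "d2 dvd k" "e1 dvd m" "e2 dvd k" and eq: "d1 * d2 = e1 * e2"
    have "coprime d1 e2" "coprime e1 d2"
      using dvd assms(3) coprime_divisors by blast+
    then have "d1 dvd e1" "e1 dvd d1"
      using eq by (metis coprime_dvd_mult_left_iff dvd_triv_left)+
    then have "d1 = e1" by (rule dvd_antisym)
    moreover have "d1 > 0" using dvd assms by (auto intro: gr0I)
    ultimately show "d1 = e1 \<and> d2 = e2" using eq by simp
  qed
  have "(\<lambda>(d1, d2). d1 * d2) ` ({d. d dvd m} \<times> {d. d dvd k}) = {d. d dvd m * k}"
    by (auto intro: mult_dvd_mono elim!: dvd_productE)
  with inj have bij: "bij_betw (\<lambda>(d1, d2). d1 * d2) ({d. d dvd m} \<times> {d. d dvd k}) {d. d dvd m * k}"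
    by (rule bij_betw_imageI)
  show ?thesis
    using sum.reindex_bij_betw[OF bij, of h] sum.cartesian_product[of "\<lambda>d1 d2. h (d1 * d2)"]
    by (simp add: case_prod_unfold)
qed

lemma dconv_commute: "dconv u v n = dconv v u n"
proof (cases "n = 0")
  case True
  then show ?thesis by (simp add: dconv_def)
next
  case False
  show ?thesis
    unfolding dconv_def
    by (rule sum.reindex_bij_witness[of _ "\<lambda>d. n div d" "\<lambda>d. n div d"])
      (use False in \<open>auto simp: div_div_eq_right dvd_div_eq_0_iff mult.commute\<close>)
qed

lemma dconv_mult_coprime:
  assumes "m > 0" "k > 0" "coprime m k"
  shows "dconv u v (m * k) =
    (\<Sum>d1 | d1 dvd m. \<Sum>d2 | d2 dvd k. u (d1 * d2) * v ((m div d1) * (k div d2)))"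
  unfolding dconv_def using assms
  by (subst sum_divisors_mult_coprime) (auto intro!: sum.cong simp: div_mult_div_if_dvd)

lemma coprime_complementary_divisors:
  fixes m k :: nat
  assumes "coprime m k" "d1 dvd m" "d2 dvd k"
  shows "coprime d1 d2" "coprime (m div d1) (k div d2)"
  using assms coprime_divisors by (metis dvd_div_mult_self dvd_triv_left)+

lemma multiplicative_funD:
  "multiplicative_fun f \<Longrightarrow> m > 0 \<Longrightarrow> k > 0 \<Longrightarrow> coprime m k \<Longrightarrow> f (m * k) = f m * f k"
  unfolding multiplicative_fun_def by blast

lemma multiplicative_Id_fun: "multiplicative_fun Id_fun"
  by (simp add: multiplicative_fun_def Id_fun_def)

lemma multiplicative_dconv:
  assumes u: "multiplicative_fun u" and v: "multiplicative_fun v"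
  shows "multiplicative_fun (dconv u v)"
  unfolding multiplicative_fun_def
proof (intro allI impI)
  fix m k :: nat
  assume mk: "m > 0" "k > 0" "coprime m k"
  have "dconv u v (m * k) =
      (\<Sum>d1 | d1 dvd m. \<Sum>d2 | d2 dvd k. (u d1 * v (m div d1)) * (u d2 * v (k div d2)))"
  proof (unfold dconv_mult_coprime[OF mk], intro sum.cong refl)
    fix d1 d2 assume "d1 \<in> {d. d dvd m}" "d2 \<in> {d. d dvd k}"
    with mk have "d1 > 0" "d2 > 0" "m div d1 > 0" "k div d2 > 0"
      "coprime d1 d2" "coprime (m div d1) (k div d2)"
      using coprime_complementary_divisors by (auto intro!: gr0I simp: dvd_div_eq_0_iff)
    then show "u (d1 * d2) * v (m div d1 * (k div d2)) = (u d1 * v (m div d1)) * (u d2 * v (k div d2))"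
      by (simp add: multiplicative_funD[OF u] multiplicative_funD[OF v])
  qed
  then show "dconv u v (m * k) = dconv u v m * dconv u v k"
    by (simp add: dconv_def sum_product)
qed

lemma dconv_leibniz_coprime:
  assumes u: "multiplicative_fun u"
    and D: "\<And>a b. a > 0 \<Longrightarrow> b > 0 \<Longrightarrow> coprime a b \<Longrightarrow> D (a * b) = w a * D b + w b * D a"
    and mk: "m > 0" "k > 0" "coprime m k"
  shows "dconv u D (m * k) = dconv u D m * dconv w u k + dconv w u m * dconv u D k"
proof -
  have "dconv D u (m * k) = (\<Sum>d1 | d1 dvd m. \<Sum>d2 | d2 dvd k.
      (w d1 * u (m div d1)) * (D d2 * u (k div d2)) + (D d1 * u (m div d1)) * (w d2 * u (k div d2)))"
  proof (unfold dconv_mult_coprime[OF mk], intro sum.cong refl)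
    fix d1 d2 assume "d1 \<in> {d. d dvd m}" "d2 \<in> {d. d dvd k}"
    with mk have "d1 > 0" "d2 > 0" "m div d1 > 0" "k div d2 > 0"
      "coprime d1 d2" "coprime (m div d1) (k div d2)"
      using coprime_complementary_divisors by (auto intro!: gr0I simp: dvd_div_eq_0_iff)
    then show "D (d1 * d2) * u (m div d1 * (k div d2)) =
        (w d1 * u (m div d1)) * (D d2 * u (k div d2)) + (D d1 * u (m div d1)) * (w d2 * u (k div d2))"
      by (simp only: D multiplicative_funD[OF u]) (simp add: algebra_simps)
  qed
  then have "dconv D u (m * k) = dconv w u m * dconv D u k + dconv D u m * dconv w u k"
    by (simp add: dconv_def sum.distrib sum_product)
  then show ?thesis
    by (simp add: dconv_commute[of u D] algebra_simps)
qed

lemma additive_transform_mult_coprime: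
  assumes "a > 0" "b > 0" "coprime a b"
  shows "additive_transform g (a * b) =
    of_nat a * additive_transform g b + of_nat b * additive_transform g a"
proof -
  define T where "T x p = g (p ^ multiplicity p x) / of_nat (p ^ multiplicity p x)" for x p :: nat
  have disj: "prime_factors a \<inter> prime_factors b = {}"
    using assms(3) by (auto simp: in_prime_factors_iff dest: coprime_common_divisor)
  have mult_a: "multiplicity p (a * b) = multiplicity p a" if "p \<in> prime_factors a" for p
  proof -
    have "prime p" "\<not> p dvd b" using that disj assms by (auto simp: in_prime_factors_iff)
    then show ?thesis
      using assms by (simp add: prime_elem_multiplicity_mult_distrib not_dvd_imp_multiplicity_0)
  qed
  have mult_b: "multiplicity p (a * b) = multiplicity p b" if "p \<in> prime_factors b" for p
  proof -
    have "prime p" "\<not> p dvd a" using that disj assms by (auto simp: in_prime_factors_iff)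
    then show ?thesis
      using assms by (simp add: prime_elem_multiplicity_mult_distrib not_dvd_imp_multiplicity_0)
  qed
  have "(\<Sum>p\<in>prime_factors (a * b). T (a * b) p) =
      (\<Sum>p\<in>prime_factors a. T (a * b) p) + (\<Sum>p\<in>prime_factors b. T (a * b) p)"
    using assms disj by (simp add: prime_factors_product sum.union_disjoint)
  also have "\<dots> = (\<Sum>p\<in>prime_factors a. T a p) + (\<Sum>p\<in>prime_factors b. T b p)"
    by (intro arg_cong2[where f = "(+)"] sum.cong refl) (simp_all add: T_def mult_a mult_b)
  finally show ?thesis
    unfolding additive_transform_def T_def[symmetric] by (simp add: algebra_simps)
qed

lemma derivation_prod_prime_powers:
  assumes F: "multiplicative_fun F"
    and G: "\<And>m k. m > 0 \<Longrightarrow> k > 0 \<Longrightarrow> coprime m k \<Longrightarrow> G (m * k) = G m * F k + F m * G k"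
    and G1: "G 1 = 0"
    and "finite P" "\<And>p. p \<in> P \<Longrightarrow> prime p" "\<And>p. p \<in> P \<Longrightarrow> F (p ^ e p) \<noteq> 0"
  shows "G (\<Prod>p\<in>P. p ^ e p) = F (\<Prod>p\<in>P. p ^ e p) * (\<Sum>p\<in>P. G (p ^ e p) / F (p ^ e p))"
  using assms(4-6)
proof (induction P rule: finite_induct)
  case empty
  show ?case using G1 by simp
next
  case (insert q P)
  let ?a = "q ^ e q" and ?b = "\<Prod>p\<in>P. p ^ e p"
  have "F ?a \<noteq> 0" using insert.prems by auto
  have pos: "?a > 0" "?b > 0"
    using insert.prems prime_gt_0_nat by (auto intro: prod_pos)
  have "coprime ?a (p ^ e p)" if "p \<in> P" for p
    using that insert.hyps(2) insert.prems
    by (metis insertCI primes_coprime coprime_power_left_iff coprime_power_right_iff)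
  then have "coprime ?a ?b"
    by (rule prod_coprime_right)
  with pos have "G (?a * ?b) = G ?a * F ?b + F ?a * G ?b" "F (?a * ?b) = F ?a * F ?b"
    using G multiplicative_funD[OF F] by auto
  with insert.IH insert.prems \<open>F ?a \<noteq> 0\<close> insert.hyps show ?case
    by (simp add: field_simps)
qed

lemma derivation_prime_factorization:
  assumes F: "multiplicative_fun F"
    and G: "\<And>m k. m > 0 \<Longrightarrow> k > 0 \<Longrightarrow> coprime m k \<Longrightarrow> G (m * k) = G m * F k + F m * G k"
    and G1: "G 1 = 0"
    and "n > 0" "\<forall>p\<in>prime_factors n. F (p ^ multiplicity p n) \<noteq> 0"
  shows "G n = F n * (\<Sum>p\<in>prime_factors n. G (p ^ multiplicity p n) / F (p ^ multiplicity p n))"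
proof -
  have "G (\<Prod>p\<in>prime_factors n. p ^ multiplicity p n) =
      F (\<Prod>p\<in>prime_factors n. p ^ multiplicity p n) *
      (\<Sum>p\<in>prime_factors n. G (p ^ multiplicity p n) / F (p ^ multiplicity p n))"
    by (rule derivation_prod_prime_powers[OF F G G1]) (use assms(5) in auto)
  then show ?thesis
    using \<open>n > 0\<close> by (simp add: prod_prime_factors)
qed

theorem corollary2p1:
  fixes f g :: "nat \<Rightarrow> complex" and n :: nat
  assumes "multiplicative_fun f"
    and "n > 0"
    and "\<forall>p\<in>prime_factors n. dconv Id_fun f (p ^ multiplicity p n) \<noteq> 0"
  shows "dconv f (additive_transform g) n =
         dconv Id_fun f n *
         (\<Sum>p\<in>prime_factors n.
            dconv f (additive_transform g) (p ^ multiplicity p n) /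
            dconv Id_fun f (p ^ multiplicity p n))"
proof (rule derivation_prime_factorization[OF _ _ _ assms(2,3)])
  show "multiplicative_fun (dconv Id_fun f)"
    by (rule multiplicative_dconv[OF multiplicative_Id_fun assms(1)])
  show "dconv f (additive_transform g) (m * k) =
      dconv f (additive_transform g) m * dconv Id_fun f k + dconv Id_fun f m * dconv f (additive_transform g) k"
    if "m > 0" "k > 0" "coprime m k" for m k
    using dconv_leibniz_coprime[OF assms(1) _ that, of "additive_transform g" Id_fun]
    by (simp add: additive_transform_mult_coprime Id_fun_def)
  show "dconv f (additive_transform g) 1 = 0"
    by (simp add: dconv_def additive_transform_def)
qed

end
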